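(* Consider a sequence of finite populations indexed by $n\to\infty$, each satisfying Assumption 1, Assumption 2 and the null hypothesis $H_0:\ T_i(1)=T_i(0)$ for all $i$, and condition on all potential event times. Then $$\sum_{k=1}^{K-1}\xi_{4k}=\sum_{k=1}^{K-1}\big\{\mathbb{E}(D_k\mid\boldsymbol{T}(1),\boldsymbol{T}(0))(1-h_k)\phi_k(1-\phi_k)-\mathbb{E}(V_k\mid\boldsymbol{T}(1),\boldsymbol{T}(0))\big\}=\log n\cdot O(1).$$
   Context: Unit $i$ ($1\le i\le n$) has potential event times $T_i(1),T_i(0)\ge 0$ (fixed constants), potential censoring times $C_i(1),C_i(0)\in[0,\infty]$, treatment indicator $Z_i\in\{0,1\}$; bold letters denote $n$-vectors. Assumption 1: conditional on all potential event and censoring times, the $Z_i$ are i.i.d. Bernoulli$(p_1)$, $p_1=1-p_0\in(0,1)$. Assumption 2: $(\boldsymbol{C}(1),\boldsymbol{C}(0))$ is independent of $(\boldsymbol{T}(1),\boldsymbol{T}(0))$ and the pairs $(C_i(1),C_i(0))$ are i.i.d. across $i$. $G_z(c)=\Pr(C_i(z)\ge c)$, $G(t)=p_1G_1(t)+p_0G_0(t)$. Realized: $W_i=\min\{T_i,C_i\}$, $\Delta_i=\mathbb{1}(T_i\le C_i)$ with $T_i=Z_iT_i(1)+(1-Z_i)T_i(0)$, $C_i=Z_iC_i(1)+(1-Z_i)C_i(0)$. Let $t_1<\dots<t_K$ be the distinct values of $\{T_i(0)\}$, $d_k=\#\{i:T_i(0)=t_k\}$, $n_k=\#\{i:T_i(0)\ge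 t_k\}$, $h_k=d_k/n_k$, $\phi_k=p_1G_1(t_k)/G(t_k)$; $N_{1k},N_{0k}$ the numbers of treated / control units with $W_i\ge t_k$, $N_k=N_{1k}+N_{0k}$, $D_k=\sum_i\Delta_i\mathbb{1}(W_i=t_k)$, $V_k=D_k(N_k-D_k)N_{1k}N_{0k}/\{N_k^2(N_k-1)\}$ (convention $0/0:=0$). $a_n=b_nO(1)$ means $a_n/b_n$ is bounded as $n\to\infty$. *)

theory Defs
  imports "HOL-Probability.Probability" "HOL-Library.Landau_Symbols"
begin

text \<open>Population of size n, units indexed 0..n-1. Under H0, T_i(1) = T_i(0) = T i (fixed).
 A sample point assigns to unit i the triple (Z_i, (C_i(1), C_i(0))), Z_i encoded as bool.
 Censoring times take values in [0,\<infinity>], modelled by ennreal.\<close>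

type_synonym outcome = "nat \<Rightarrow> bool \<times> (ennreal \<times> ennreal)"

text \<open>Joint law of (Z, C(1), C(0)) given the potential event times:
 Z_i iid Bernoulli(p1), independent of the iid censoring pairs with law M.\<close>
definition popM :: "real \<Rightarrow> (ennreal \<times> ennreal) measure \<Rightarrow> nat \<Rightarrow> outcome measure" where
  "popM p1 M n = PiM {..<n} (\<lambda>_. pair_measure (measure_pmf (bernoulli_pmf p1)) M)"

definition Zr :: "outcome \<Rightarrow> nat \<Rightarrow> bool" where
  "Zr \<omega> i = fst (\<omega> i)"

definition Cr :: "outcome \<Rightarrow> nat \<Rightarrow> ennreal" where
  "Cr \<omega> i = (if fst (\<omega> i) then fst (snd (\<omega> i)) else snd (snd (\<omega> i)))"

definition Wr :: "(nat \<Rightarrow> real) \<Rightarrow> outcome \<Rightarrow> nat \<Rightarrow> ennreal" where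
  "Wr T \<omega> i = min (ennreal (T i)) (Cr \<omega> i)"

definition Deltar :: "(nat \<Rightarrow> real) \<Rightarrow> outcome \<Rightarrow> nat \<Rightarrow> bool" where
  "Deltar T \<omega> i = (ennreal (T i) \<le> Cr \<omega> i)"

text \<open>Distinct event times t_1 < ... < t_K (k is 1-based).\<close>
definition Kn :: "nat \<Rightarrow> (nat \<Rightarrow> real) \<Rightarrow> nat" where
  "Kn n T = card (T ` {..<n})"

definition tk :: "nat \<Rightarrow> (nat \<Rightarrow> real) \<Rightarrow> nat \<Rightarrow> real" where
  "tk n T k = sorted_list_of_set (T ` {..<n}) ! (k - 1)"

definition dk :: "nat \<Rightarrow> (nat \<Rightarrow> real) \<Rightarrow> nat \<Rightarrow> nat" where
  "dk n T k = card {i\<in>{..<n}. T i = tk n T k}"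

definition nk :: "nat \<Rightarrow> (nat \<Rightarrow> real) \<Rightarrow> nat \<Rightarrow> nat" where
  "nk n T k = card {i\<in>{..<n}. tk n T k \<le> T i}"

definition hk :: "nat \<Rightarrow> (nat \<Rightarrow> real) \<Rightarrow> nat \<Rightarrow> real" where
  "hk n T k = real (dk n T k) / real (nk n T k)"

definition G1 :: "(ennreal \<times> ennreal) measure \<Rightarrow> real \<Rightarrow> real" where
  "G1 M c = measure M {x \<in> space M. ennreal c \<le> fst x}"

definition G0 :: "(ennreal \<times> ennreal) measure \<Rightarrow> real \<Rightarrow> real" where
  "G0 M c = measure M {x \<in> space M. ennreal c \<le> snd x}"

definition Gmix :: "real \<Rightarrow> (ennreal \<times> ennreal) measure \<Rightarrow> real \<Rightarrow> real" where
  "Gmix p1 M c = p1 * G1 M c + (1 - p1) * G0 M c"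

definition phik :: "real \<Rightarrow> (ennreal \<times> ennreal) measure \<Rightarrow> nat \<Rightarrow> (nat \<Rightarrow> real) \<Rightarrow> nat \<Rightarrow> real" where
  "phik p1 M n T k = p1 * G1 M (tk n T k) / Gmix p1 M (tk n T k)"

definition N1k :: "nat \<Rightarrow> (nat \<Rightarrow> real) \<Rightarrow> nat \<Rightarrow> outcome \<Rightarrow> nat" where
  "N1k n T k \<omega> = card {i\<in>{..<n}. Zr \<omega> i \<and> ennreal (tk n T k) \<le> Wr T \<omega> i}"

definition N0k :: "nat \<Rightarrow> (nat \<Rightarrow> real) \<Rightarrow> nat \<Rightarrow> outcome \<Rightarrow> nat" where
  "N0k n T k \<omega> = card {i\<in>{..<n}. \<not> Zr \<omega> i \<and> ennreal (tk n T k) \<le> Wr T \<omega> i}"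

definition Nk :: "nat \<Rightarrow> (nat \<Rightarrow> real) \<Rightarrow> nat \<Rightarrow> outcome \<Rightarrow> nat" where
  "Nk n T k \<omega> = N1k n T k \<omega> + N0k n T k \<omega>"

definition Dk :: "nat \<Rightarrow> (nat \<Rightarrow> real) \<Rightarrow> nat \<Rightarrow> outcome \<Rightarrow> nat" where
  "Dk n T k \<omega> = card {i\<in>{..<n}. Deltar T \<omega> i \<and> Wr T \<omega> i = ennreal (tk n T k)}"

text \<open>Real division by zero is 0 in Isabelle, matching the convention 0/0 := 0.\<close>
definition Vk :: "nat \<Rightarrow> (nat \<Rightarrow> real) \<Rightarrow> nat \<Rightarrow> outcome \<Rightarrow> real" where
  "Vk n T k \<omega> = real (Dk n T k \<omega>) * (real (Nk n T k \<omega>) - real (Dk n T k \<omega>))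
      * real (N1k n T k \<omega>) * real (N0k n T k \<omega>)
      / ((real (Nk n T k \<omega>))^2 * (real (Nk n T k \<omega>) - 1))"

definition xi4 :: "real \<Rightarrow> (ennreal \<times> ennreal) measure \<Rightarrow> nat \<Rightarrow> (nat \<Rightarrow> real) \<Rightarrow> nat \<Rightarrow> real" where
  "xi4 p1 M n T k =
     (\<integral>\<omega>. real (Dk n T k \<omega>) \<partial>popM p1 M n) * (1 - hk n T k)
       * phik p1 M n T k * (1 - phik p1 M n T k)
     - (\<integral>\<omega>. Vk n T k \<omega> \<partial>popM p1 M n)"

end

theory Submission
  imports Defs "HOL-Analysis.Harmonic_Numbers"
begin

(* Fix an event time t = t_k and give every unit the record (Z_i, [t <= C_i]) of its arm and of
   whether it is still uncensored at t.  Under H0 the records are i.i.d., and D_k, N_k, N_1k, N_0k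
   are counts of records over the tied set S = {T_i = t} and the risk set U = {T_i >= t}.
   Pairing distinct units gives E V_k = phi (1 - phi) E[D_k - D_k^2 / N_k], because given who is at
   risk the arms of at-risk units are i.i.d. Bernoulli(phi).  Exchangeability of the records and
   two linear identities for E[Y_i Y_j / N_k] pin E[D_k^2 / N_k] down to d_k^2 G(t) / n_k up to
   d_k / n_k, whence |xi_4k| <= d_k / n_k.  Finally sum_k d_k / n_k = sum_i 1 / #{j. T_j >= T_i}
   is at most the harmonic number H_n <= ln n + 1. *)

section \<open>Expectations under i.i.d. product distributions\<close>

abbreviation iid_expectation :: "'a set \<Rightarrow> 'b \<Rightarrow> 'b pmf \<Rightarrow> (('a \<Rightarrow> 'b) \<Rightarrow> real) \<Rightarrow> real" where
  "iid_expectation J d q f \<equiv> measure_pmf.expectation (Pi_pmf J d (\<lambda>_. q)) f"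

lemma finite_set_Pi_pmf_iid:
  fixes q :: "'b::finite pmf"
  assumes "finite J"
  shows "finite (set_pmf (Pi_pmf J d (\<lambda>_. q)))"
proof (rule finite_subset)
  show "set_pmf (Pi_pmf J d (\<lambda>_. q)) \<subseteq> PiE_dflt J d (\<lambda>_. UNIV)"
    using set_Pi_pmf_subset'[OF assms, of d "\<lambda>_. q"] by (auto simp: PiE_dflt_def)
  show "finite (PiE_dflt J d (\<lambda>_. (UNIV :: 'b set)))"
    using assms by (intro finite_PiE_dflt) auto
qed

lemma integrable_Pi_pmf_iid [simp]:
  fixes q :: "'b::finite pmf" and f :: "_ \<Rightarrow> real"
  shows "finite J \<Longrightarrow> integrable (measure_pmf (Pi_pmf J d (\<lambda>_. q))) f"
  by (rule integrable_measure_pmf_finite[OF finite_set_Pi_pmf_iid])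

lemma iid_expectation_fix_coord:
  fixes q :: "'b::finite pmf" and G :: "_ \<Rightarrow> real"
  assumes "finite J" "i \<in> J"
  shows "iid_expectation J d q (\<lambda>x. of_bool (x i = c) * G x)
       = pmf q c * iid_expectation (J - {i}) d q (\<lambda>f. G (f(i := c)))"
proof -
  let ?P = "Pi_pmf (J - {i}) d (\<lambda>_. q)"
  have fin: "finite (J - {i})" "finite (set_pmf ?P)"
    using assms by (auto intro: finite_set_Pi_pmf_iid)
  have "Pi_pmf J d (\<lambda>_. q) = map_pmf (\<lambda>(y, f). f(i := y)) (pair_pmf q ?P)"
    using assms Pi_pmf_insert[OF fin(1), of i d "\<lambda>_. q"] by (simp add: insert_absorb)
  hence "iid_expectation J d q (\<lambda>x. of_bool (x i = c) * G x)
      = measure_pmf.expectation (pair_pmf q ?P) (\<lambda>(y, f). of_bool (y = c) * G (f(i := c)))"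
    by (auto simp: case_prod_unfold intro!: Bochner_Integration.integral_cong)
  also have "\<dots> = (\<Sum>(y, f)\<in>UNIV \<times> set_pmf ?P. of_bool (y = c) * G (f(i := c)) * pmf (pair_pmf q ?P) (y, f))"
    using fin by (subst integral_measure_pmf_real[where A = "UNIV \<times> set_pmf ?P"]) (auto simp: case_prod_unfold)
  also have "\<dots> = (\<Sum>y\<in>UNIV. of_bool (y = c) * (pmf q y * (\<Sum>f\<in>set_pmf ?P. G (f(i := c)) * pmf ?P f)))"
    unfolding sum.cartesian_product[symmetric] by (simp add: pmf_pair sum_distrib_left ac_simps)
  also have "\<dots> = pmf q c * (\<Sum>f\<in>set_pmf ?P. G (f(i := c)) * pmf ?P f)"
    by simp
  also have "\<dots> = pmf q c * iid_expectation (J - {i}) d q (\<lambda>f. G (f(i := c)))"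
    using fin by (simp add: integral_measure_pmf_real[where A = "set_pmf ?P"])
  finally show ?thesis .
qed

lemma iid_expectation_permute:
  fixes q :: "'b::finite pmf"
  assumes "finite J" "bij_betw \<pi> J J" "\<And>l. l \<notin> J \<Longrightarrow> \<pi> l = l"
  shows "iid_expectation J d q (\<lambda>x. G (x \<circ> \<pi>)) = iid_expectation J d q G"
proof -
  have "Pi_pmf J d (\<lambda>_. q) = map_pmf (\<lambda>x. x \<circ> \<pi>) (Pi_pmf J d (\<lambda>_. q))"
    using assms by (intro Pi_pmf_bij_betw) auto
  then show ?thesis by (metis integral_map_pmf)
qed

definition count_units :: "'a set \<Rightarrow> ('b \<Rightarrow> bool) \<Rightarrow> ('a \<Rightarrow> 'b) \<Rightarrow> nat" where
  "count_units A P x = card {i \<in> A. P (x i)}"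

lemma real_count_units: "finite A \<Longrightarrow> real (count_units A P x) = (\<Sum>i\<in>A. of_bool (P (x i)))"
  unfolding count_units_def by (simp add: Int_def conj_commute)

lemma count_units_mono: "finite A \<Longrightarrow> B \<subseteq> A \<Longrightarrow> count_units B P x \<le> count_units A P x"
  unfolding count_units_def by (intro card_mono) auto

lemma count_units_permute:
  assumes "bij_betw \<pi> A A"
  shows "count_units A P (x \<circ> \<pi>) = count_units A P x"
proof -
  have "{i \<in> A. P (x i)} = \<pi> ` {i \<in> A. P ((x \<circ> \<pi>) i)}"
    using assms by (auto simp: bij_betw_def image_iff)
  moreover have "inj_on \<pi> {i \<in> A. P ((x \<circ> \<pi>) i)}"
    using assms by (auto simp: bij_betw_def intro: inj_on_subset)
  ultimately show ?thesis
    unfolding count_units_def by (simp add: card_image)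
qed

lemma count_units_at_risk_split:
  fixes x :: "'a \<Rightarrow> bool \<times> bool"
  assumes "finite A"
  shows "count_units A snd x = count_units A (\<lambda>v. v = (True, True)) x + count_units A (\<lambda>v. v = (False, True)) x"
proof -
  have "{i \<in> A. snd (x i)} = {i \<in> A. x i = (True, True)} \<union> {i \<in> A. x i = (False, True)}"
    by (auto simp: prod_eq_iff)
  then show ?thesis
    unfolding count_units_def using assms by (simp add: card_Un_disjoint disjoint_iff)
qed

lemma count_units_mult_count_units:
  assumes "finite A"
  shows "real (count_units A P x) * real (count_units A Q x)
    = (\<Sum>i\<in>A. \<Sum>j\<in>A - {i}. of_bool (P (x i)) * of_bool (Q (x j))) + real (count_units A (\<lambda>v. P v \<and> Q v) x)"
proof -
  have "real (count_units A P x) * real (count_units A Q x) = (\<Sum>i\<in>A. \<Sum>j\<in>A. of_bool (P (x i)) * of_bool (Q (x j)))"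
    using assms by (simp only: real_count_units sum_product)
  also have "\<dots> = (\<Sum>i\<in>A. (\<Sum>j\<in>A - {i}. of_bool (P (x i)) * of_bool (Q (x j))) + of_bool (P (x i)) * of_bool (Q (x i)))"
    using assms by (intro sum.cong refl) (simp only: sum.remove add.commute)
  finally show ?thesis
    using assms by (simp only: sum.distrib real_count_units of_bool_conj)
qed

section \<open>The expected log-rank variance\<close>

text \<open>From here on a unit's record is a pair (treated, at risk).  Given the at-risk indicators,
  the arms of the at-risk units are i.i.d. Bernoulli with parameter phi = a / (a + b), where
  a and b are the probabilities of the records (True, True) and (False, True).  The next two lemmas
  express this without conditioning, one pair of units at a time.\<close>

lemma iid_expectation_fix_two_at_risk:
  fixes q :: "(bool \<times> bool) pmf" and d :: "bool \<times> bool" and F :: "('a \<Rightarrow> bool \<times> bool) \<Rightarrow> real"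
  assumes "finite J" "i \<in> J" "j \<in> J" "i \<noteq> j"
    and F: "\<And>x y. (\<And>l. snd (x l) = snd (y l)) \<Longrightarrow> F x = F y"
  defines "\<kappa> \<equiv> iid_expectation (J - {i} - {j}) d q (\<lambda>f. F (f(j := (True, True), i := (True, True))))"
  shows "iid_expectation J d q (\<lambda>x. of_bool (x i = (z, True)) * of_bool (x j = (z', True)) * F x)
    = pmf q (z, True) * pmf q (z', True) * \<kappa>"
proof -
  have "iid_expectation J d q (\<lambda>x. of_bool (x i = (z, True)) * (of_bool (x j = (z', True)) * F x))
      = pmf q (z, True) * iid_expectation (J - {i}) d q (\<lambda>f. of_bool (f j = (z', True)) * F (f(i := (z, True))))"
    using assms(1-4) by (simp add: iid_expectation_fix_coord[where G = "\<lambda>x. of_bool (x j = (z', True)) * F x"])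
  also have "iid_expectation (J - {i}) d q (\<lambda>f. of_bool (f j = (z', True)) * F (f(i := (z, True))))
      = pmf q (z', True) * iid_expectation (J - {i} - {j}) d q (\<lambda>f. F (f(j := (z', True), i := (z, True))))"
    using assms(1-4) by (intro iid_expectation_fix_coord[where G = "\<lambda>f. F (f(i := (z, True)))"]) auto
  also have "(\<lambda>f. F (f(j := (z', True), i := (z, True)))) = (\<lambda>f. F (f(j := (True, True), i := (True, True))))"
    by (intro ext F) simp
  finally show ?thesis
    unfolding \<kappa>_def by (simp only: mult.assoc)
qed

lemma of_bool_snd_eq_sum:
  fixes v :: "bool \<times> bool"
  shows "(of_bool (snd v) :: real) = (\<Sum>z\<in>UNIV. of_bool (v = (z, True)))"
  by (cases v) (simp add: UNIV_bool del: sum_of_bool_eq)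

lemma iid_expectation_both_at_risk:
  fixes q :: "(bool \<times> bool) pmf" and d :: "bool \<times> bool" and F :: "('a \<Rightarrow> bool \<times> bool) \<Rightarrow> real"
  assumes "finite J" "i \<in> J" "j \<in> J" "i \<noteq> j"
    and F: "\<And>x y. (\<And>l. snd (x l) = snd (y l)) \<Longrightarrow> F x = F y"
  defines "\<kappa> \<equiv> iid_expectation (J - {i} - {j}) d q (\<lambda>f. F (f(j := (True, True), i := (True, True))))"
  shows "iid_expectation J d q (\<lambda>x. of_bool (snd (x i)) * of_bool (snd (x j)) * F x)
    = (pmf q (True, True) + pmf q (False, True))\<^sup>2 * \<kappa>"
proof -
  have "iid_expectation J d q (\<lambda>x. of_bool (snd (x i)) * of_bool (snd (x j)) * F x)
      = iid_expectation J d q (\<lambda>x. \<Sum>z\<in>UNIV. \<Sum>z'\<in>UNIV. of_bool (x i = (z, True)) * of_bool (x j = (z', True)) * F x)"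
    by (simp only: of_bool_snd_eq_sum sum_product) (simp only: sum_distrib_right)
  also have "\<dots> = (\<Sum>z\<in>UNIV. \<Sum>z'\<in>UNIV.
      iid_expectation J d q (\<lambda>x. of_bool (x i = (z, True)) * of_bool (x j = (z', True)) * F x))"
    using assms(1) by (simp only: Bochner_Integration.integral_sum integrable_Pi_pmf_iid)
  also have "\<dots> = (\<Sum>z\<in>UNIV. \<Sum>z'\<in>UNIV. pmf q (z, True) * pmf q (z', True) * \<kappa>)"
    unfolding \<kappa>_def by (intro sum.cong refl iid_expectation_fix_two_at_risk[OF assms(1-4)]) (rule F)
  finally show ?thesis
    by (simp add: UNIV_bool power2_eq_square algebra_simps)
qed

definition logrank_var :: "real \<Rightarrow> real \<Rightarrow> real \<Rightarrow> real \<Rightarrow> real" where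
  "logrank_var D N N1 N0 = D * (N - D) * N1 * N0 / (N\<^sup>2 * (N - 1))"

definition logrank_weight :: "'a set \<Rightarrow> 'a set \<Rightarrow> ('a \<Rightarrow> 'b \<times> bool) \<Rightarrow> real" where
  "logrank_weight S U x = real (count_units S snd x) * (real (count_units U snd x) - real (count_units S snd x))
      / ((real (count_units U snd x))\<^sup>2 * (real (count_units U snd x) - 1))"

lemma logrank_weight_cong: "(\<And>l. snd (x l) = snd (y l)) \<Longrightarrow> logrank_weight S U x = logrank_weight S U y"
  unfolding logrank_weight_def count_units_def by simp

lemma logrank_var_eq_sum_arm_pairs:
  fixes x :: "'a \<Rightarrow> bool \<times> bool"
  assumes "finite U"
  shows "logrank_var (count_units S snd x) (count_units U snd x)
      (count_units U (\<lambda>v. v = (True, True)) x) (count_units U (\<lambda>v. v = (False, True)) x)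
    = (\<Sum>i\<in>U. \<Sum>j\<in>U - {i}. of_bool (x i = (True, True)) * of_bool (x j = (False, True)) * logrank_weight S U x)"
proof -
  have "count_units U (\<lambda>v. v = (True, True) \<and> v = (False, True)) x = 0"
    by (simp add: count_units_def cong: conj_cong)
  then have arms: "real (count_units U (\<lambda>v. v = (True, True)) x) * real (count_units U (\<lambda>v. v = (False, True)) x)
      = (\<Sum>i\<in>U. \<Sum>j\<in>U - {i}. of_bool (x i = (True, True)) * of_bool (x j = (False, True)))"
    using count_units_mult_count_units[OF assms, of "\<lambda>v. v = (True, True)" x "\<lambda>v. v = (False, True)"] by simp
  have "logrank_var (count_units S snd x) (count_units U snd x)
      (count_units U (\<lambda>v. v = (True, True)) x) (count_units U (\<lambda>v. v = (False, True)) x)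
    = real (count_units U (\<lambda>v. v = (True, True)) x) * real (count_units U (\<lambda>v. v = (False, True)) x)
      * logrank_weight S U x"
    unfolding logrank_var_def logrank_weight_def by (simp add: mult.commute mult.left_commute)
  then show ?thesis
    by (simp only: arms sum_distrib_right)
qed

lemma sq_over_count_eq_sum_at_risk_pairs:
  assumes "finite U" "S \<subseteq> U"
  shows "real (count_units S snd x) - (real (count_units S snd x))\<^sup>2 / real (count_units U snd x)
    = (\<Sum>i\<in>U. \<Sum>j\<in>U - {i}. of_bool (snd (x i)) * of_bool (snd (x j)) * logrank_weight S U x)"
proof -
  define D N where "D = count_units S snd x" and "N = count_units U snd x"
  have "D \<le> N"
    unfolding D_def N_def using assms by (rule count_units_mono)
  have pairs: "real N * (real N - 1) = (\<Sum>i\<in>U. \<Sum>j\<in>U - {i}. of_bool (snd (x i)) * of_bool (snd (x j)))"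
    unfolding N_def using count_units_mult_count_units[OF assms(1), of snd x snd] by (simp add: right_diff_distrib)
  have "real D - (real D)\<^sup>2 / real N = logrank_weight S U x * (real N * (real N - 1))"
  proof -
    consider "N = 0" | "N = 1" | "N \<ge> 2" by linarith
    then show ?thesis
    proof cases
      case 2
      then have "D = 0 \<or> D = 1" using \<open>D \<le> N\<close> by linarith
      then show ?thesis using 2 by (auto simp: logrank_weight_def D_def N_def)
    next
      case 3
      then show ?thesis by (simp add: logrank_weight_def D_def[symmetric] N_def[symmetric] field_simps power2_eq_square)
    qed (use \<open>D \<le> N\<close> in simp)
  qed
  also have "\<dots> = (\<Sum>i\<in>U. \<Sum>j\<in>U - {i}. of_bool (snd (x i)) * of_bool (snd (x j))) * logrank_weight S U x"
    unfolding pairs by (rule mult.commute)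
  finally show ?thesis
    unfolding D_def N_def by (simp only: sum_distrib_right)
qed

lemma iid_expectation_logrank_var:
  fixes q :: "(bool \<times> bool) pmf" and d :: "bool \<times> bool"
  assumes "finite J" "U \<subseteq> J" "S \<subseteq> U"
  defines "\<phi> \<equiv> pmf q (True, True) / (pmf q (True, True) + pmf q (False, True))"
  shows "iid_expectation J d q (\<lambda>x. logrank_var (count_units S snd x) (count_units U snd x)
            (count_units U (\<lambda>v. v = (True, True)) x) (count_units U (\<lambda>v. v = (False, True)) x))
    = \<phi> * (1 - \<phi>) * iid_expectation J d q
        (\<lambda>x. real (count_units S snd x) - (real (count_units S snd x))\<^sup>2 / real (count_units U snd x))"
proof -
  define a b where "a = pmf q (True, True)" and "b = pmf q (False, True)"
  define \<kappa> where "\<kappa> i j = iid_expectation (J - {i} - {j}) d q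
      (\<lambda>f. logrank_weight S U (f(j := (True, True), i := (True, True))))" for i j
  have finU: "finite U"
    using assms(1,2) by (rule finite_subset[rotated])
  have "iid_expectation J d q (\<lambda>x. logrank_var (count_units S snd x) (count_units U snd x)
            (count_units U (\<lambda>v. v = (True, True)) x) (count_units U (\<lambda>v. v = (False, True)) x))
      = (\<Sum>i\<in>U. \<Sum>j\<in>U - {i}. iid_expectation J d q
          (\<lambda>x. of_bool (x i = (True, True)) * of_bool (x j = (False, True)) * logrank_weight S U x))"
    using assms(1) by (simp only: logrank_var_eq_sum_arm_pairs[OF finU] Bochner_Integration.integral_sum
        integrable_Pi_pmf_iid)
  also have "\<dots> = a * b * (\<Sum>i\<in>U. \<Sum>j\<in>U - {i}. \<kappa> i j)"
    using assms(2) unfolding a_def b_def \<kappa>_def sum_distrib_left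
    by (intro sum.cong refl iid_expectation_fix_two_at_risk[OF assms(1)] logrank_weight_cong) auto
  finally have var: "iid_expectation J d q (\<lambda>x. logrank_var (count_units S snd x) (count_units U snd x)
            (count_units U (\<lambda>v. v = (True, True)) x) (count_units U (\<lambda>v. v = (False, True)) x))
      = a * b * (\<Sum>i\<in>U. \<Sum>j\<in>U - {i}. \<kappa> i j)" .
  have "iid_expectation J d q
      (\<lambda>x. real (count_units S snd x) - (real (count_units S snd x))\<^sup>2 / real (count_units U snd x))
      = (\<Sum>i\<in>U. \<Sum>j\<in>U - {i}. iid_expectation J d q
          (\<lambda>x. of_bool (snd (x i)) * of_bool (snd (x j)) * logrank_weight S U x))"
    using assms(1) by (simp only: sq_over_count_eq_sum_at_risk_pairs[OF finU assms(3)]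
        Bochner_Integration.integral_sum integrable_Pi_pmf_iid)
  also have "\<dots> = (a + b)\<^sup>2 * (\<Sum>i\<in>U. \<Sum>j\<in>U - {i}. \<kappa> i j)"
    using assms(2) unfolding a_def b_def \<kappa>_def sum_distrib_left
    by (intro sum.cong refl iid_expectation_both_at_risk[OF assms(1)] logrank_weight_cong) auto
  finally have pairs: "iid_expectation J d q
      (\<lambda>x. real (count_units S snd x) - (real (count_units S snd x))\<^sup>2 / real (count_units U snd x))
      = (a + b)\<^sup>2 * (\<Sum>i\<in>U. \<Sum>j\<in>U - {i}. \<kappa> i j)" .
  show ?thesis
  proof (cases "a + b = 0")
    case True
    then have "a = 0"
      using pmf_nonneg unfolding a_def b_def by (metis add_nonneg_eq_0_iff)
    then show ?thesis
      unfolding var \<phi>_def a_def[symmetric] b_def[symmetric] by simp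
  next
    case False
    then have "a / (a + b) * (1 - a / (a + b)) * (a + b)\<^sup>2 = a * b"
      by (simp add: divide_simps power2_eq_square)
    then show ?thesis
      unfolding var pairs \<phi>_def a_def[symmetric] b_def[symmetric] by (simp only: mult.assoc[symmetric])
  qed
qed

section \<open>Exchangeability and the second moment of D / N\<close>

lemma iid_expectation_coord_indicator:
  fixes q :: "'b::finite pmf"
  assumes "finite J" "i \<in> J"
  shows "iid_expectation J d q (\<lambda>x. of_bool (x i = c)) = pmf q c"
  using iid_expectation_fix_coord[OF assms, of d q c "\<lambda>_. 1"] by simp

lemma iid_expectation_at_risk:
  fixes q :: "(bool \<times> bool) pmf"
  assumes "finite J" "i \<in> J"
  shows "iid_expectation J d q (\<lambda>x. of_bool (snd (x i))) = pmf q (True, True) + pmf q (False, True)"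
  using assms by (simp add: of_bool_snd_eq_sum Bochner_Integration.integral_sum iid_expectation_coord_indicator
      UNIV_bool del: sum_of_bool_eq)

lemma pmf_at_risk_le_one:
  fixes q :: "(bool \<times> bool) pmf"
  shows "pmf q (True, True) + pmf q (False, True) \<le> 1"
proof -
  have "pmf q (True, True) + pmf q (False, True) = measure_pmf.prob q {(True, True), (False, True)}"
    by (simp add: measure_measure_pmf_finite)
  then show ?thesis
    by simp
qed

lemma card_mult_sum_eq_of_const:
  fixes f :: "'a \<Rightarrow> real"
  assumes "finite A" "B \<subseteq> A" "\<And>x y. x \<in> A \<Longrightarrow> y \<in> A \<Longrightarrow> f x = f y"
  shows "real (card A) * sum f B = real (card B) * sum f A"
proof (cases "A = {}")
  case False
  then obtain a where a: "a \<in> A" by blast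
  have "sum f C = real (card C) * f a" if "C \<subseteq> A" for C
    using that assms(3)[OF _ a] by (simp add: subset_iff)
  then show ?thesis
    using assms(2) by simp
qed (use assms(2) in simp)

lemma second_moment_algebra:
  fixes D u p g Y X :: real
  assumes "1 \<le> D" "D \<le> u" "0 \<le> p" "p \<le> 1" "0 \<le> g" "g \<le> 1"
    and Y: "u * Y = D * p" and X: "(u - 1) * X = (D - 1) * (D * g - Y)" and X1: "D = 1 \<Longrightarrow> X = 0"
  shows "\<bar>Y + X - D\<^sup>2 * g / u\<bar> \<le> D / u"
proof (cases "u = 1")
  case True
  then show ?thesis
    using assms by (simp add: power2_eq_square abs_le_iff)
next
  case False
  then have "u > 1" "u \<noteq> 0" using assms(1,2) by auto
  have dev: "Y + X - D\<^sup>2 * g / u = D / u * ((u - D) / (u - 1) * (p - g))"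
  proof -
    have Yv: "Y = D * p / u"
      using Y \<open>u > 1\<close> by (simp add: field_simps)
    have Xv: "X = (D - 1) * (D * g - D * p / u) / (u - 1)"
      using X \<open>u > 1\<close> unfolding Yv by (simp add: field_simps)
    have "u - 1 \<noteq> 0"
      using \<open>u > 1\<close> by simp
    then show ?thesis
      unfolding Xv Yv using \<open>u \<noteq> 0\<close> by (simp add: field_simps power2_eq_square)
  qed
  have "(u - D) * \<bar>p - g\<bar> \<le> (u - 1) * 1"
    using assms(1-6) by (intro mult_mono) auto
  then have "\<bar>(u - D) / (u - 1) * (p - g)\<bar> \<le> 1"
    using assms(2) \<open>u > 1\<close> by (simp add: abs_mult divide_le_eq_1)
  moreover have "\<bar>D / u\<bar> = D / u"
    using assms(1,2) by simp
  ultimately show ?thesis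
    unfolding dev abs_mult by (metis abs_ge_zero mult_left_le)
qed

text \<open>By exchangeability these values are constant on the diagonal and along each off-diagonal
  row; the row sums are the at-risk probability and the diagonal sums to P(N > 0).  These facts
  are exactly the hypotheses of second_moment_algebra.\<close>

definition pair_risk_share :: "'a set \<Rightarrow> 'b \<times> bool \<Rightarrow> ('b \<times> bool) pmf \<Rightarrow> 'a set \<Rightarrow> 'a \<Rightarrow> 'a \<Rightarrow> real" where
  "pair_risk_share J d q U i j =
     iid_expectation J d q (\<lambda>x. of_bool (snd (x i)) * of_bool (snd (x j)) / real (count_units U snd x))"

lemma pair_risk_share_transpose:
  fixes q :: "('b::finite \<times> bool) pmf"
  assumes "finite J" "U \<subseteq> J" "a \<in> U" "b \<in> U"
  defines "\<tau> \<equiv> Transposition.transpose a b"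
  shows "pair_risk_share J d q U (\<tau> i) (\<tau> j) = pair_risk_share J d q U i j"
proof -
  have "a \<in> J" "b \<in> J"
    using assms by auto
  then have "bij_betw \<tau> J J" "bij_betw \<tau> U U"
    using assms by auto
  moreover have "\<tau> l = l" if "l \<notin> J" for l
    using \<open>a \<in> J\<close> \<open>b \<in> J\<close> that unfolding \<tau>_def by (metis transpose_apply_other)
  ultimately show ?thesis
    unfolding pair_risk_share_def
    using iid_expectation_permute[OF assms(1), of \<tau> d q
        "\<lambda>x. of_bool (snd (x i)) * of_bool (snd (x j)) / real (count_units U snd x)"]
    by (simp add: count_units_permute)
qed

lemma pair_risk_share_diag_eq:
  fixes q :: "('b::finite \<times> bool) pmf"
  assumes "finite J" "U \<subseteq> J" "i \<in> U" "i' \<in> U"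
  shows "pair_risk_share J d q U i i = pair_risk_share J d q U i' i'"
  using pair_risk_share_transpose[OF assms, of d q i i] by simp

lemma pair_risk_share_row_eq:
  fixes q :: "('b::finite \<times> bool) pmf"
  assumes "finite J" "U \<subseteq> J" "j \<in> U - {i}" "j' \<in> U - {i}"
  shows "pair_risk_share J d q U i j = pair_risk_share J d q U i j'"
proof -
  have "Transposition.transpose j j' i = i"
    using assms(3,4) by auto
  then show ?thesis
    using pair_risk_share_transpose[of J U j j' d q i j] assms by simp
qed

lemma sum_pair_risk_share_row:
  fixes q :: "(bool \<times> bool) pmf"
  assumes "finite J" "U \<subseteq> J" "i \<in> U"
  shows "(\<Sum>j\<in>U. pair_risk_share J d q U i j) = pmf q (True, True) + pmf q (False, True)"
proof -
  have finU: "finite U"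
    using assms(1,2) by (rule finite_subset[rotated])
  have "(\<Sum>j\<in>U. pair_risk_share J d q U i j)
      = iid_expectation J d q (\<lambda>x. of_bool (snd (x i)) * real (count_units U snd x) / real (count_units U snd x))"
    unfolding pair_risk_share_def using assms(1) finU
    by (simp add: Bochner_Integration.integral_sum[symmetric] sum_divide_distrib[symmetric]
        sum_distrib_left[symmetric] real_count_units del: sum_of_bool_eq)
  also have "\<dots> = iid_expectation J d q (\<lambda>x. of_bool (snd (x i)))"
  proof (intro Bochner_Integration.integral_cong refl)
    fix x :: "'a \<Rightarrow> bool \<times> bool"
    have "snd (x i) \<Longrightarrow> count_units U snd x \<noteq> 0"
      using finU assms(3) by (auto simp: count_units_def)
    then show "of_bool (snd (x i)) * real (count_units U snd x) / real (count_units U snd x) = of_bool (snd (x i))"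
      by (cases "snd (x i)") auto
  qed
  finally show ?thesis
    using assms by (simp add: iid_expectation_at_risk subset_iff)
qed

lemma sum_pair_risk_share_diag:
  fixes q :: "('b::finite \<times> bool) pmf"
  assumes "finite J" "U \<subseteq> J"
  shows "0 \<le> (\<Sum>i\<in>U. pair_risk_share J d q U i i)" "(\<Sum>i\<in>U. pair_risk_share J d q U i i) \<le> 1"
proof -
  have finU: "finite U"
    using assms by (rule finite_subset[rotated])
  have "(\<Sum>i\<in>U. of_bool (snd (x i)) * of_bool (snd (x i)) / real (count_units U snd x))
      = real (count_units U snd x) / real (count_units U snd x)" for x :: "'a \<Rightarrow> 'b \<times> bool"
    by (simp only: real_count_units[OF finU] sum_divide_distrib[symmetric] of_bool_conj[symmetric] conj_absorb)
  then have sum: "(\<Sum>i\<in>U. pair_risk_share J d q U i i)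
      = iid_expectation J d q (\<lambda>x. real (count_units U snd x) / real (count_units U snd x))"
    unfolding pair_risk_share_def using assms(1)
    by (simp only: Bochner_Integration.integral_sum[symmetric] integrable_Pi_pmf_iid)
  show "0 \<le> (\<Sum>i\<in>U. pair_risk_share J d q U i i)"
    unfolding sum by simp
  have "iid_expectation J d q (\<lambda>x. real (count_units U snd x) / real (count_units U snd x))
      \<le> iid_expectation J d q (\<lambda>_. 1)"
    using assms(1) by (intro integral_mono) auto
  then show "(\<Sum>i\<in>U. pair_risk_share J d q U i i) \<le> 1"
    unfolding sum by simp
qed

lemma iid_expectation_sq_over_count_eq:
  fixes q :: "('b::finite \<times> bool) pmf"
  assumes "finite J" "finite S"
  shows "iid_expectation J d q (\<lambda>x. (real (count_units S snd x))\<^sup>2 / real (count_units U snd x))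
    = (\<Sum>i\<in>S. pair_risk_share J d q U i i) + (\<Sum>i\<in>S. \<Sum>j\<in>S - {i}. pair_risk_share J d q U i j)"
proof -
  have "(real (count_units S snd x))\<^sup>2 / real (count_units U snd x)
      = (\<Sum>i\<in>S. \<Sum>j\<in>S. of_bool (snd (x i)) * of_bool (snd (x j)) / real (count_units U snd x))"
    for x :: "'a \<Rightarrow> 'b \<times> bool"
    by (simp only: power2_eq_square real_count_units[OF assms(2)] sum_product sum_divide_distrib)
  then have "iid_expectation J d q (\<lambda>x. (real (count_units S snd x))\<^sup>2 / real (count_units U snd x))
      = (\<Sum>i\<in>S. \<Sum>j\<in>S. pair_risk_share J d q U i j)"
    unfolding pair_risk_share_def using assms(1)
    by (simp only: Bochner_Integration.integral_sum integrable_Pi_pmf_iid)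
  also have "\<dots> = (\<Sum>i\<in>S. pair_risk_share J d q U i i + (\<Sum>j\<in>S - {i}. pair_risk_share J d q U i j))"
    using assms(2) by (intro sum.cong refl) (simp add: sum.remove)
  finally show ?thesis
    by (simp only: sum.distrib)
qed

lemma sum_pair_risk_share_offdiag_row:
  fixes q :: "(bool \<times> bool) pmf"
  assumes J: "finite J" and UJ: "U \<subseteq> J" and "S \<subseteq> U" "i \<in> S"
  shows "(real (card U) - 1) * (\<Sum>j\<in>S - {i}. pair_risk_share J d q U i j)
    = (real (card S) - 1) * (pmf q (True, True) + pmf q (False, True) - pair_risk_share J d q U i i)"
proof -
  let ?s = "pair_risk_share J d q U"
  have finU: "finite U" and finS: "finite S"
    using assms by (auto intro: finite_subset)
  have "real (card (U - {i})) * (\<Sum>j\<in>S - {i}. ?s i j) = real (card (S - {i})) * (\<Sum>j\<in>U - {i}. ?s i j)"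
    using finU assms(3) by (intro card_mult_sum_eq_of_const) (auto intro: pair_risk_share_row_eq[OF J UJ])
  moreover have "(\<Sum>j\<in>U - {i}. ?s i j) = pmf q (True, True) + pmf q (False, True) - ?s i i"
    using sum_pair_risk_share_row[OF J UJ, of i d q] sum.remove[OF finU, of i "?s i"] assms(3,4) by auto
  moreover have "card (U - {i}) = card U - 1" "card (S - {i}) = card S - 1" "card U \<ge> 1" "card S \<ge> 1"
    using assms(3,4) finU finS by (auto simp: Suc_le_eq card_gt_0_iff)
  ultimately show ?thesis
    by (simp add: of_nat_diff)
qed

lemma iid_expectation_sq_over_count_bound:
  fixes q :: "(bool \<times> bool) pmf"
  assumes J: "finite J" and UJ: "U \<subseteq> J" and SU: "S \<subseteq> U" and "S \<noteq> {}"
  shows "\<bar>iid_expectation J d q (\<lambda>x. (real (count_units S snd x))\<^sup>2 / real (count_units U snd x))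
      - (real (card S))\<^sup>2 * (pmf q (True, True) + pmf q (False, True)) / real (card U)\<bar>
    \<le> real (card S) / real (card U)"
proof -
  let ?s = "pair_risk_share J d q U"
  define g where "g = pmf q (True, True) + pmf q (False, True)"
  define Y where "Y = (\<Sum>i\<in>S. ?s i i)"
  define X where "X = (\<Sum>i\<in>S. \<Sum>j\<in>S - {i}. ?s i j)"
  have finU: "finite U" and finS: "finite S"
    using J UJ SU by (auto intro: finite_subset)
  have cardS: "card S \<ge> 1" and cardSU: "card S \<le> card U"
    using finS \<open>S \<noteq> {}\<close> finU SU by (auto simp: Suc_le_eq card_gt_0_iff card_mono)
  have Y_eq: "real (card U) * Y = real (card S) * (\<Sum>i\<in>U. ?s i i)"
    unfolding Y_def using finU SU
    by (rule card_mult_sum_eq_of_const) (auto intro: pair_risk_share_diag_eq[OF J UJ])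
  have "(real (card U) - 1) * X = (\<Sum>i\<in>S. (real (card U) - 1) * (\<Sum>j\<in>S - {i}. ?s i j))"
    unfolding X_def by (rule sum_distrib_left)
  also have "\<dots> = (\<Sum>i\<in>S. (real (card S) - 1) * (g - ?s i i))"
    unfolding g_def using SU by (intro sum.cong refl sum_pair_risk_share_offdiag_row[OF J UJ])
  finally have X_eq: "(real (card U) - 1) * X = (real (card S) - 1) * (real (card S) * g - Y)"
    unfolding Y_def by (simp only: sum_distrib_left[symmetric] sum_subtractf sum_constant)
  have X1: "X = 0" if "real (card S) = 1"
  proof -
    have "card S = 1"
      using that by simp
    then obtain s where "S = {s}"
      by (rule card_1_singletonE)
    then show ?thesis
      unfolding X_def by simp
  qed
  have "\<bar>Y + X - (real (card S))\<^sup>2 * g / real (card U)\<bar> \<le> real (card S) / real (card U)"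
    by (rule second_moment_algebra[OF _ _ _ _ _ _ Y_eq X_eq X1])
      (use cardS cardSU sum_pair_risk_share_diag[OF J UJ, of d q] pmf_at_risk_le_one[of q] in
        \<open>simp_all add: g_def\<close>)
  then show ?thesis
    unfolding iid_expectation_sq_over_count_eq[OF J finS] Y_def X_def g_def .
qed

lemma iid_expectation_count_at_risk:
  fixes q :: "(bool \<times> bool) pmf"
  assumes "finite J" "S \<subseteq> J"
  shows "iid_expectation J d q (\<lambda>x. real (count_units S snd x))
    = real (card S) * (pmf q (True, True) + pmf q (False, True))"
proof -
  have "finite S"
    using assms by (rule finite_subset[rotated])
  then show ?thesis
    using assms by (simp add: real_count_units Bochner_Integration.integral_sum iid_expectation_at_risk
        subset_iff del: sum_of_bool_eq)
qed

lemma iid_logrank_deviation_bound: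
  fixes q :: "(bool \<times> bool) pmf"
  assumes J: "finite J" and UJ: "U \<subseteq> J" and SU: "S \<subseteq> U" and "S \<noteq> {}"
  defines "\<phi> \<equiv> pmf q (True, True) / (pmf q (True, True) + pmf q (False, True))"
  shows "\<bar>iid_expectation J d q (\<lambda>x. real (count_units S snd x)) * (1 - real (card S) / real (card U)) * \<phi> * (1 - \<phi>)
      - iid_expectation J d q (\<lambda>x. logrank_var (count_units S snd x) (count_units U snd x)
          (count_units U (\<lambda>v. v = (True, True)) x) (count_units U (\<lambda>v. v = (False, True)) x))\<bar>
    \<le> real (card S) / real (card U)"
proof -
  define g where "g = pmf q (True, True) + pmf q (False, True)"
  define T2 where "T2 = iid_expectation J d q (\<lambda>x. (real (count_units S snd x))\<^sup>2 / real (count_units U snd x))"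
  have ED: "iid_expectation J d q (\<lambda>x. real (count_units S snd x)) = real (card S) * g"
    unfolding g_def using SU UJ by (intro iid_expectation_count_at_risk[OF J]) auto
  have EV: "iid_expectation J d q (\<lambda>x. logrank_var (count_units S snd x) (count_units U snd x)
          (count_units U (\<lambda>v. v = (True, True)) x) (count_units U (\<lambda>v. v = (False, True)) x))
      = \<phi> * (1 - \<phi>) * (real (card S) * g - T2)"
    unfolding iid_expectation_logrank_var[OF J UJ SU] \<phi>_def[symmetric] T2_def ED[symmetric] using J
    by simp
  have \<phi>: "0 \<le> \<phi>" "\<phi> \<le> 1"
  proof -
    have "a / (a + b) \<le> 1" if "0 \<le> a" "0 \<le> b" for a b :: real
      using that by (cases "a + b = 0") (simp_all add: divide_le_eq_1)
    then show "0 \<le> \<phi>" "\<phi> \<le> 1"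
      unfolding \<phi>_def by simp_all
  qed
  have "\<bar>\<phi> * (1 - \<phi>) * (T2 - (real (card S))\<^sup>2 * g / real (card U))\<bar>
      \<le> 1 * \<bar>T2 - (real (card S))\<^sup>2 * g / real (card U)\<bar>"
    unfolding abs_mult using \<phi> by (intro mult_right_mono) (auto simp: mult_le_one)
  also have "\<dots> \<le> real (card S) / real (card U)"
    using iid_expectation_sq_over_count_bound[OF assms(1-4), of d q] unfolding T2_def g_def by simp
  finally show ?thesis
    unfolding ED EV by (simp add: algebra_simps power2_eq_square)
qed

section \<open>From the censoring model to i.i.d. records\<close>

lemma pmf_bind_map_Pair: "pmf (bind_pmf A (\<lambda>z. map_pmf (Pair z) (B z))) (z, r) = pmf A z * pmf (B z) r"
proof -
  have "pmf (map_pmf (Pair z') (B z')) (z, r) = indicator {z} z' * pmf (B z) r" for z'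
  proof (cases "z' = z")
    case True
    then show ?thesis
      using pmf_map_inj'[of "Pair z" "B z" r] by (simp add: inj_on_def)
  next
    case False
    then show ?thesis
      by (subst pmf_map) (auto simp: measure_pmf.prob_eq_0 AE_measure_pmf_iff)
  qed
  then show ?thesis
    by (simp add: pmf_bind measure_pmf_single)
qed

definition at_risk_pmf :: "real \<Rightarrow> (ennreal \<times> ennreal) measure \<Rightarrow> real \<Rightarrow> (bool \<times> bool) pmf" where
  "at_risk_pmf p1 M t =
     bind_pmf (bernoulli_pmf p1) (\<lambda>z. map_pmf (Pair z) (bernoulli_pmf (if z then G1 M t else G0 M t)))"

text \<open>Under H0 a unit with event time at least t is at risk at t iff t <= C_i, and it has an
  observed event at t iff moreover its event time is t; so these records determine all counts
  at t.\<close>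

definition at_risk_record :: "real \<Rightarrow> bool \<times> (ennreal \<times> ennreal) \<Rightarrow> bool \<times> bool" where
  "at_risk_record t w = (fst w, ennreal t \<le> (if fst w then fst (snd w) else snd (snd w)))"

context
  fixes M :: "(ennreal \<times> ennreal) measure"
  assumes M: "prob_space M" and sets_M: "sets M = sets borel"
begin

interpretation M: prob_space M by (rule M)

lemma G1_bounds: "0 \<le> G1 M c" "G1 M c \<le> 1"
  unfolding G1_def by simp_all

lemma G0_bounds: "0 \<le> G0 M c" "G0 M c \<le> 1"
  unfolding G0_def by simp_all

lemma pmf_at_risk_pmf:
  assumes "0 \<le> p1" "p1 \<le> 1"
  shows "pmf (at_risk_pmf p1 M t) (True, True) = p1 * G1 M t"
    and "pmf (at_risk_pmf p1 M t) (False, True) = (1 - p1) * G0 M t"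
  unfolding at_risk_pmf_def pmf_bind_map_Pair using assms G1_bounds G0_bounds by simp_all

lemma censoring_times_measurable [measurable]: "fst \<in> borel_measurable M" "snd \<in> borel_measurable M"
  using borel_measurable_continuous_onI[OF continuous_on_fst[OF continuous_on_id]]
    borel_measurable_continuous_onI[OF continuous_on_snd[OF continuous_on_id]]
  by (simp_all add: measurable_cong_sets[OF sets_M refl])

lemma censoring_event_set: "{y \<in> space M. ennreal t \<le> (if z then fst y else snd y)} \<in> sets M"
  by measurable

lemma emeasure_censoring_event:
  "emeasure M {y \<in> space M. (ennreal t \<le> (if z then fst y else snd y)) = r}
    = pmf (bernoulli_pmf (if z then G1 M t else G0 M t)) r"
proof -
  define A where "A = {y \<in> space M. ennreal t \<le> (if z then fst y else snd y)}"
  have A: "A \<in> sets M"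
    unfolding A_def by (rule censoring_event_set)
  have "measure M A = (if z then G1 M t else G0 M t)"
    unfolding A_def G1_def G0_def by (cases z) auto
  moreover have "{y \<in> space M. (ennreal t \<le> (if z then fst y else snd y)) = r} = (if r then A else space M - A)"
    unfolding A_def by auto
  ultimately show ?thesis
    using M.prob_compl[OF A] G1_bounds G0_bounds by (simp add: M.emeasure_eq_measure)
qed

lemma measurable_at_risk_record:
  "at_risk_record t \<in> pair_measure (measure_pmf (bernoulli_pmf p1)) M \<rightarrow>\<^sub>M measure_pmf q"
proof -
  have "at_risk_record t \<in> pair_measure (measure_pmf (bernoulli_pmf p1)) M \<rightarrow>\<^sub>M count_space UNIV"
    unfolding at_risk_record_def by measurable
  then show ?thesis
    by (simp add: measurable_cong_sets)
qed

lemma distr_at_risk_record: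
  fixes p1 :: real
  defines "\<mu> \<equiv> pair_measure (measure_pmf (bernoulli_pmf p1)) M"
  shows "distr \<mu> (measure_pmf (at_risk_pmf p1 M t)) (at_risk_record t) = measure_pmf (at_risk_pmf p1 M t)"
proof (rule measure_eqI_finite[where A = UNIV])
  fix c :: "bool \<times> bool"
  obtain z r where c: "c = (z, r)"
    by (cases c)
  define B where "B = {y \<in> space M. (ennreal t \<le> (if z then fst y else snd y)) = r}"
  have B: "B \<in> sets M"
    unfolding B_def using censoring_event_set[of t z] by (cases r) (auto simp: set_diff_eq[symmetric])
  have "at_risk_record t -` {c} \<inter> space \<mu> = {z} \<times> B"
  proof (intro set_eqI)
    fix w :: "bool \<times> ennreal \<times> ennreal"
    show "w \<in> at_risk_record t -` {c} \<inter> space \<mu> \<longleftrightarrow> w \<in> {z} \<times> B"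
      unfolding c B_def \<mu>_def at_risk_record_def space_pair_measure
      by (cases w, cases "fst w = z") auto
  qed
  then have "emeasure (distr \<mu> (measure_pmf (at_risk_pmf p1 M t)) (at_risk_record t)) {c} = emeasure \<mu> ({z} \<times> B)"
    unfolding \<mu>_def by (subst emeasure_distr[OF measurable_at_risk_record]) simp_all
  also have "\<dots> = emeasure (measure_pmf (bernoulli_pmf p1)) {z} * emeasure M B"
    unfolding \<mu>_def using B by (intro M.emeasure_pair_measure_Times) simp_all
  also have "\<dots> = ennreal (pmf (at_risk_pmf p1 M t) c)"
    unfolding c B_def at_risk_pmf_def pmf_bind_map_Pair emeasure_censoring_event
    by (simp add: emeasure_pmf_single ennreal_mult')
  finally show "emeasure (distr \<mu> (measure_pmf (at_risk_pmf p1 M t)) (at_risk_record t)) {c}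
      = emeasure (measure_pmf (at_risk_pmf p1 M t)) {c}"
    by (simp add: emeasure_pmf_single)
qed simp_all

end

lemma sets_PiM_measure_pmf:
  fixes q :: "'b::finite pmf"
  assumes "finite I"
  shows "sets (PiM I (\<lambda>_. measure_pmf q)) = Pow (PiE I (\<lambda>_. UNIV))"
proof
  show "sets (PiM I (\<lambda>_. measure_pmf q)) \<subseteq> Pow (PiE I (\<lambda>_. UNIV))"
    using sets.sets_into_space[of _ "PiM I (\<lambda>_. measure_pmf q)"] by (auto simp: space_PiM)
  show "Pow (PiE I (\<lambda>_. UNIV)) \<subseteq> sets (PiM I (\<lambda>_. measure_pmf q))"
  proof
    fix A assume A: "A \<in> Pow (PiE I (\<lambda>_. (UNIV :: 'b set)))"
    have "finite (PiE I (\<lambda>_. (UNIV :: 'b set)))"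
      using assms by (intro finite_PiE) auto
    then have "countable A"
      using A by (auto intro: countable_finite finite_subset)
    moreover have "{a} \<in> sets (PiM I (\<lambda>_. measure_pmf q))" if "a \<in> A" for a
    proof -
      have "a \<in> extensional I"
        using A that by (auto simp: PiE_def)
      then have "{a} = PiE I (\<lambda>i. {a i})"
        by (simp add: PiE_singleton)
      then show ?thesis
        using assms by simp
    qed
    ultimately show "A \<in> sets (PiM I (\<lambda>_. measure_pmf q))"
      by (metis sets.countable)
  qed
qed

lemma borel_measurable_PiM_measure_pmf:
  fixes q :: "'b::finite pmf" and \<Phi> :: "('a \<Rightarrow> 'b) \<Rightarrow> real"
  assumes "finite I"
  shows "\<Phi> \<in> borel_measurable (PiM I (\<lambda>_. measure_pmf q))"
  using sets_PiM_measure_pmf[OF assms, of q] measurable_cong_sets[of "count_space (PiE I (\<lambda>_. UNIV))"]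
  by (metis borel_measurable_count_space sets_count_space)

lemma distr_Pi_pmf_restrict:
  fixes q :: "'b::finite pmf"
  assumes "finite I"
  shows "distr (Pi_pmf I d (\<lambda>_. q)) (PiM I (\<lambda>_. measure_pmf q)) (\<lambda>x. restrict x I)
    = PiM I (\<lambda>_. measure_pmf q)"
proof -
  interpret product_prob_space "\<lambda>_. measure_pmf q"
    by (intro product_prob_spaceI) (simp add: measure_pmf.prob_space_axioms)
  show ?thesis
  proof (rule PiM_eqI[OF assms])
    fix A assume A: "\<And>i. i \<in> I \<Longrightarrow> A i \<in> sets (measure_pmf q)"
    have "emeasure (distr (Pi_pmf I d (\<lambda>_. q)) (PiM I (\<lambda>_. measure_pmf q)) (\<lambda>x. restrict x I)) (PiE I A)
        = emeasure (Pi_pmf I d (\<lambda>_. q)) ((\<lambda>x. restrict x I) -` PiE I A)"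
      using A assms by (subst emeasure_distr) (auto simp: space_PiM)
    also have "\<dots> = emeasure (Pi_pmf I d (\<lambda>_. q)) (PiE_dflt I d A)"
      by (intro emeasure_eq_AE AE_pmfI) (auto simp: PiE_dflt_def set_Pi_pmf assms)
    also have "\<dots> = (\<Prod>i\<in>I. emeasure (measure_pmf q) (A i))"
      by (simp add: measure_pmf.emeasure_eq_measure measure_Pi_pmf_PiE_dflt assms prod_ennreal)
    finally show "emeasure (distr (Pi_pmf I d (\<lambda>_. q)) (PiM I (\<lambda>_. measure_pmf q)) (\<lambda>x. restrict x I)) (PiE I A)
        = (\<Prod>i\<in>I. emeasure (measure_pmf q) (A i))" .
  qed simp
qed

text \<open>The default value undefined of the product pmf is the junk value of compose outside I.\<close>

lemma integral_PiM_compose_eq_iid_expectation: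
  fixes q :: "'b::finite pmf" and \<Phi> :: "('a \<Rightarrow> 'b) \<Rightarrow> real"
  assumes I: "finite I" and N: "prob_space N" and \<rho>: "\<rho> \<in> N \<rightarrow>\<^sub>M measure_pmf q"
    and distr_\<rho>: "distr N (measure_pmf q) \<rho> = measure_pmf q"
  shows "(\<integral>\<omega>. \<Phi> (compose I \<rho> \<omega>) \<partial>PiM I (\<lambda>_. N)) = iid_expectation I undefined q \<Phi>"
proof -
  let ?Q = "PiM I (\<lambda>_. measure_pmf q)"
  have compose: "compose I \<rho> \<in> PiM I (\<lambda>_. N) \<rightarrow>\<^sub>M ?Q"
    unfolding compose_def using \<rho> by measurable
  have law: "distr (PiM I (\<lambda>_. N)) ?Q (compose I \<rho>) = ?Q"
    using \<rho> distr_\<rho> N I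
    by (subst distr_PiM_finite_prob_space') (auto simp: measure_pmf.prob_space_axioms measurable_cong_sets)
  have restrict: "(\<lambda>x. restrict x I) \<in> Pi_pmf I undefined (\<lambda>_. q) \<rightarrow>\<^sub>M ?Q"
    by (simp add: measurable_cong_sets space_PiM)
  have "(\<integral>\<omega>. \<Phi> (compose I \<rho> \<omega>) \<partial>PiM I (\<lambda>_. N)) = integral\<^sup>L ?Q \<Phi>"
    using integral_distr[OF compose borel_measurable_PiM_measure_pmf[OF I]] law by simp
  also have "\<dots> = integral\<^sup>L (distr (Pi_pmf I undefined (\<lambda>_. q)) ?Q (\<lambda>x. restrict x I)) \<Phi>"
    using distr_Pi_pmf_restrict[OF I, of undefined q] by simp
  also have "\<dots> = iid_expectation I undefined q (\<lambda>x. \<Phi> (restrict x I))"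
    by (rule integral_distr[OF restrict borel_measurable_PiM_measure_pmf[OF I]])
  also have "\<dots> = iid_expectation I undefined q \<Phi>"
  proof (intro integral_cong_AE)
    have "restrict x I = x" if "x \<in> set_pmf (Pi_pmf I undefined (\<lambda>_. q))" for x
      using that set_Pi_pmf_subset[OF I, of undefined "\<lambda>_. q"] by (auto simp: restrict_def fun_eq_iff)
    then show "AE x in Pi_pmf I undefined (\<lambda>_. q). \<Phi> (restrict x I) = \<Phi> x"
      by (simp add: AE_measure_pmf_iff)
  qed simp_all
  finally show ?thesis .
qed

section \<open>The bound at a single event time\<close>

lemma observed_at_iff:
  assumes "0 \<le> s" "0 \<le> t"
  shows "(ennreal s \<le> C \<and> min (ennreal s) C = ennreal t) \<longleftrightarrow> (s = t \<and> ennreal t \<le> C)"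
  using assms by (cases "ennreal s \<le> C") (auto simp: min_def)

lemma at_risk_iff:
  assumes "0 \<le> s"
  shows "ennreal t \<le> min (ennreal s) C \<longleftrightarrow> t \<le> s \<and> ennreal t \<le> C"
  using assms by (simp add: ennreal_le_iff)

lemma tk_in_image:
  assumes "1 \<le> k" "k \<le> Kn n T"
  shows "tk n T k \<in> T ` {..<n}"
proof -
  have "k - 1 < length (sorted_list_of_set (T ` {..<n}))"
    using assms by (simp add: Kn_def)
  then show ?thesis
    unfolding tk_def by (metis nth_mem finite_imageI finite_lessThan set_sorted_list_of_set)
qed

lemma logrank_counts_eq_count_units:
  fixes T :: "nat \<Rightarrow> real" and \<omega> :: outcome
  assumes T: "\<And>i. i < n \<Longrightarrow> 0 \<le> T i" and t: "0 \<le> tk n T k"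
  defines "x \<equiv> compose {..<n} (at_risk_record (tk n T k)) \<omega>"
    and "S \<equiv> {i \<in> {..<n}. T i = tk n T k}" and "U \<equiv> {i \<in> {..<n}. tk n T k \<le> T i}"
  shows "Dk n T k \<omega> = count_units S snd x"
    and "N1k n T k \<omega> = count_units U (\<lambda>v. v = (True, True)) x"
    and "N0k n T k \<omega> = count_units U (\<lambda>v. v = (False, True)) x"
    and "Nk n T k \<omega> = count_units U snd x"
proof -
  have x: "x i = (Zr \<omega> i, ennreal (tk n T k) \<le> Cr \<omega> i)" if "i < n" for i
    using that unfolding x_def compose_def at_risk_record_def Zr_def Cr_def by simp
  show D: "Dk n T k \<omega> = count_units S snd x"
    unfolding Dk_def count_units_def S_def Deltar_def Wr_def
    using observed_at_iff[OF T t] x by (intro arg_cong[where f = card]) auto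
  show N1: "N1k n T k \<omega> = count_units U (\<lambda>v. v = (True, True)) x"
    unfolding N1k_def count_units_def U_def Wr_def
    using at_risk_iff[OF T] x by (intro arg_cong[where f = card]) auto
  show N0: "N0k n T k \<omega> = count_units U (\<lambda>v. v = (False, True)) x"
    unfolding N0k_def count_units_def U_def Wr_def
    using at_risk_iff[OF T] x by (intro arg_cong[where f = card]) auto
  show "Nk n T k \<omega> = count_units U snd x"
    unfolding Nk_def N1 N0 U_def by (simp add: count_units_at_risk_split)
qed

lemma integral_popM_eq_iid_expectation:
  assumes M: "prob_space M" "sets M = sets borel"
  shows "(\<integral>\<omega>. \<Phi> (compose {..<n} (at_risk_record t) \<omega>) \<partial>popM p1 M n)
    = iid_expectation {..<n} undefined (at_risk_pmf p1 M t) \<Phi>"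
  unfolding popM_def using assms
  by (intro integral_PiM_compose_eq_iid_expectation measurable_at_risk_record[OF M]
      distr_at_risk_record[OF M] prob_space_pair measure_pmf.prob_space_axioms M) simp_all

lemma xi4_bound:
  fixes T :: "nat \<Rightarrow> real"
  assumes p1: "0 < p1" "p1 < 1" and M: "prob_space M" "sets M = sets borel"
    and T: "\<And>i. i < n \<Longrightarrow> 0 \<le> T i" and k: "1 \<le> k" "k \<le> Kn n T"
  shows "\<bar>xi4 p1 M n T k\<bar> \<le> real (dk n T k) / real (nk n T k)"
proof -
  define t where "t = tk n T k"
  define S where "S = {i \<in> {..<n}. T i = t}"
  define U where "U = {i \<in> {..<n}. t \<le> T i}"
  define q where "q = at_risk_pmf p1 M t"
  define x where "x \<omega> = compose {..<n} (at_risk_record t) \<omega>" for \<omega>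
  obtain j where j: "j < n" "T j = t"
    using tk_in_image[OF k] unfolding t_def by auto
  then have "S \<noteq> {}" "S \<subseteq> U" "U \<subseteq> {..<n}" "0 \<le> t"
    using T unfolding S_def U_def by auto
  have counts: "Dk n T k \<omega> = count_units S snd (x \<omega>)"
    "N1k n T k \<omega> = count_units U (\<lambda>v. v = (True, True)) (x \<omega>)"
    "N0k n T k \<omega> = count_units U (\<lambda>v. v = (False, True)) (x \<omega>)"
    "Nk n T k \<omega> = count_units U snd (x \<omega>)" for \<omega>
    using logrank_counts_eq_count_units[OF T \<open>0 \<le> t\<close>[unfolded t_def], of \<omega>]
    unfolding x_def S_def U_def t_def by simp_all
  have bridge: "(\<integral>\<omega>. \<Phi> (x \<omega>) \<partial>popM p1 M n) = iid_expectation {..<n} undefined q \<Phi>" for \<Phi>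
    unfolding x_def q_def by (rule integral_popM_eq_iid_expectation[OF M])
  have "phik p1 M n T k = pmf q (True, True) / (pmf q (True, True) + pmf q (False, True))"
    unfolding phik_def Gmix_def q_def t_def using p1 by (simp add: pmf_at_risk_pmf[OF M])
  moreover have "hk n T k = real (card S) / real (card U)" "dk n T k = card S" "nk n T k = card U"
    unfolding hk_def dk_def nk_def S_def U_def t_def by simp_all
  moreover have "(\<integral>\<omega>. real (Dk n T k \<omega>) \<partial>popM p1 M n)
      = iid_expectation {..<n} undefined q (\<lambda>y. real (count_units S snd y))"
    unfolding counts by (rule bridge)
  moreover have "(\<integral>\<omega>. Vk n T k \<omega> \<partial>popM p1 M n)
      = iid_expectation {..<n} undefined q (\<lambda>y. logrank_var (count_units S snd y) (count_units U snd y)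
          (count_units U (\<lambda>v. v = (True, True)) y) (count_units U (\<lambda>v. v = (False, True)) y))"
    unfolding Vk_def counts logrank_var_def[symmetric] by (rule bridge)
  ultimately show ?thesis
    unfolding xi4_def using iid_logrank_deviation_bound[of "{..<n}" U S undefined q]
      \<open>S \<noteq> {}\<close> \<open>S \<subseteq> U\<close> \<open>U \<subseteq> {..<n}\<close> by simp
qed

section \<open>Summing over event times\<close>

lemma sum_inverse_card_upper_le_harm:
  fixes T :: "'a \<Rightarrow> 'b::linorder"
  assumes "finite A"
  shows "(\<Sum>i\<in>A. 1 / real (card {j \<in> A. T i \<le> T j})) \<le> harm (card A)"
  using assms
proof (induction "card A" arbitrary: A)
  case 0
  then show ?case
    by (simp add: harm_nonneg)
next
  case (Suc m)
  txt \<open>A unit with minimal T has all of A in its risk set; removing it only shrinks the others.\<close>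
  define a where "a = arg_min_on T A"
  have "A \<noteq> {}"
    using Suc.hyps(2) by auto
  then have a: "a \<in> A" and a_min: "\<And>j. j \<in> A \<Longrightarrow> T a \<le> T j"
    unfolding a_def using Suc.prems by (auto intro: arg_min_if_finite arg_min_least)
  have fin': "finite (A - {a})" and card': "m = card (A - {a})"
    using Suc.prems Suc.hyps(2) a by auto
  have "(\<Sum>i\<in>A - {a}. 1 / real (card {j \<in> A. T i \<le> T j}))
      \<le> (\<Sum>i\<in>A - {a}. 1 / real (card {j \<in> A - {a}. T i \<le> T j}))"
  proof (rule sum_mono)
    fix i assume i: "i \<in> A - {a}"
    then have "0 < card {j \<in> A - {a}. T i \<le> T j}"
      using fin' by (auto simp: card_gt_0_iff)
    moreover have "card {j \<in> A - {a}. T i \<le> T j} \<le> card {j \<in> A. T i \<le> T j}"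
      using Suc.prems by (intro card_mono) auto
    ultimately show "1 / real (card {j \<in> A. T i \<le> T j}) \<le> 1 / real (card {j \<in> A - {a}. T i \<le> T j})"
      by (intro divide_left_mono) auto
  qed
  also have "\<dots> \<le> harm m"
    using Suc.hyps(1)[OF card' fin'] card' by simp
  finally have rest: "(\<Sum>i\<in>A - {a}. 1 / real (card {j \<in> A. T i \<le> T j})) \<le> harm m" .
  have "{j \<in> A. T a \<le> T j} = A"
    using a_min by auto
  then have "(\<Sum>i\<in>A. 1 / real (card {j \<in> A. T i \<le> T j})) \<le> 1 / real (card A) + harm m"
    using rest Suc.prems by (simp add: sum.remove[OF _ a])
  then show ?case
    unfolding Suc.hyps(2)[symmetric] by (simp add: harm_Suc inverse_eq_divide)
qed

lemma harm_le_ln_add_one: "1 \<le> n \<Longrightarrow> harm n \<le> ln (real n) + (1 :: real)"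
  using euler_mascheroni_sequence_decreasing[of 1 n] by (simp add: harm_def)

lemma sum_event_times:
  fixes f :: "real \<Rightarrow> real"
  shows "(\<Sum>k = 1..Kn n T. f (tk n T k)) = (\<Sum>v\<in>T ` {..<n}. f v)"
proof -
  define xs where "xs = sorted_list_of_set (T ` {..<n})"
  have "(\<Sum>k = 1..Kn n T. f (tk n T k)) = (\<Sum>j<length xs. f (xs ! j))"
    unfolding tk_def Kn_def xs_def[symmetric]
    by (rule sum.reindex_bij_witness[of _ Suc "\<lambda>k. k - 1"]) (auto simp: xs_def)
  also have "\<dots> = (\<Sum>v\<in>set xs. f v)"
    by (rule sum.reindex_bij_betw[OF bij_betw_nth]) (auto simp: xs_def)
  finally show ?thesis
    by (simp add: xs_def)
qed

lemma sum_ties_eq_sum_units: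
  fixes T :: "'a \<Rightarrow> 'b::linorder"
  assumes "finite A"
  shows "(\<Sum>v\<in>T ` A. real (card {i \<in> A. T i = v}) / real (card {i \<in> A. v \<le> T i}))
    = (\<Sum>i\<in>A. 1 / real (card {j \<in> A. T i \<le> T j}))"
proof -
  have "(\<Sum>i\<in>A. 1 / real (card {j \<in> A. T i \<le> T j}))
      = (\<Sum>v\<in>T ` A. \<Sum>i\<in>{i \<in> A. T i = v}. 1 / real (card {j \<in> A. T i \<le> T j}))"
    using assms by (rule sum.image_gen)
  also have "\<dots> = (\<Sum>v\<in>T ` A. real (card {i \<in> A. T i = v}) / real (card {i \<in> A. v \<le> T i}))"
    by (intro sum.cong refl) simp
  finally show ?thesis ..
qed

lemma sum_xi4_bound:
  fixes T :: "nat \<Rightarrow> real"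
  assumes "0 < p1" "p1 < 1" "prob_space M" "sets M = sets borel" "\<And>i. i < n \<Longrightarrow> 0 \<le> T i"
  shows "\<bar>\<Sum>k = 1..<Kn n T. xi4 p1 M n T k\<bar> \<le> harm n"
proof -
  define f where "f v = real (card {i \<in> {..<n}. T i = v}) / real (card {i \<in> {..<n}. v \<le> T i})" for v
  have "\<bar>\<Sum>k = 1..<Kn n T. xi4 p1 M n T k\<bar> \<le> (\<Sum>k = 1..<Kn n T. f (tk n T k))"
    using xi4_bound[OF assms] unfolding f_def dk_def nk_def
    by (intro order.trans[OF sum_abs] sum_mono) simp
  also have "\<dots> \<le> (\<Sum>k = 1..Kn n T. f (tk n T k))"
    by (intro sum_mono2) (auto simp: f_def)
  also have "\<dots> = (\<Sum>v\<in>T ` {..<n}. f v)"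
    by (rule sum_event_times)
  also have "\<dots> = (\<Sum>i<n. 1 / real (card {j \<in> {..<n}. T i \<le> T j}))"
    unfolding f_def by (rule sum_ties_eq_sum_units) simp
  also have "\<dots> \<le> harm n"
    using sum_inverse_card_upper_le_harm[of "{..<n}" T] by simp
  finally show ?thesis .
qed

theorem lemmaA11:
  fixes p1 :: real and M :: "(ennreal \<times> ennreal) measure"
    and Tseq :: "nat \<Rightarrow> nat \<Rightarrow> real"
  assumes "0 < p1" and "p1 < 1"
    and "prob_space M" and "sets M = sets borel"
    and "\<And>n i. i < n \<Longrightarrow> 0 \<le> Tseq n i"
  shows "(\<lambda>n. \<Sum>k = 1..<Kn n (Tseq n). xi4 p1 M n (Tseq n) k) \<in> O(\<lambda>n. ln (real n))"
proof (rule bigoI[where c = 2])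
  have "\<bar>\<Sum>k = 1..<Kn n (Tseq n). xi4 p1 M n (Tseq n) k\<bar> \<le> 2 * \<bar>ln (real n)\<bar>" if n: "n \<ge> 3" for n
  proof -
    have "exp 1 \<le> real n"
      using exp_le n by linarith
    then have "1 \<le> ln (real n)"
      using ln_exp ln_le_cancel_iff[of "exp 1" "real n"] by force
    have "\<bar>\<Sum>k = 1..<Kn n (Tseq n). xi4 p1 M n (Tseq n) k\<bar> \<le> harm n"
      using assms by (intro sum_xi4_bound) auto
    also have "\<dots> \<le> ln (real n) + 1"
      using n by (intro harm_le_ln_add_one) simp
    finally show ?thesis
      using \<open>1 \<le> ln (real n)\<close> by simp
  qed
  then show "\<forall>\<^sub>F n in at_top. norm (\<Sum>k = 1..<Kn n (Tseq n). xi4 p1 M n (Tseq n) k) \<le> 2 * norm (ln (real n))"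
    unfolding real_norm_def by (intro eventually_at_top_linorderI[of 3]) auto
qed

end
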